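(* Let $m,n\ge1$ and let $\mathcal{C}$ be a $\beta$-avoiding simplicial complex that has an induced subcomplex isomorphic to $D_{m,n}$. Then the subcomplex of $\mathcal{C}$ induced on its non-ghost vertices is isomorphic to $\operatorname{cone}^p(D_{m,n})$ for some $p\ge0$.
   Context: A simplicial complex on a finite ground set $V$ is a family of subsets of $V$ closed under subsets; a vertex $v$ is a ghost vertex if $\{v\}\notin\mathcal{C}$, otherwise non-ghost. Induced subcomplex on $W\subseteq V$: $\{F\in\mathcal{C}:F\subseteq W\}$ on $W$. Alexander dual of $\mathcal{D}$ on $V$: $\mathcal{D}^*=\{S\subseteq V: V\setminus S\notin\mathcal{D}\}$. $\Delta_k$ is the complex on a $(k+1)$-set with that set as sole facet, $\sqcup$ is disjoint union, and $D_{m,n}=(\Delta_m\sqcup\Delta_n)^*$; equivalently, on ground set $M\sqcup N$ with $|M|=m+1$, $|N|=n+1$, its facets are the sets omitting exactly one element of $M$ and one of $N$. $\operatorname{cone}^p(\mathcal{D})$ adds $p$ new vertices $u_1,\dots,u_p$ with facets $F\cup\{u_1,\dots,u_p\}$ ($\operatorname{cone}^0(\mathcal{D})=\mathcal{D}$). For $S\subseteq V$, $\mathcal{C}\setminus S$ is the induced subcomplex on $V\setminus S$; for a face $R$, $\operatorname{link}_R(\mathcal{C})=\{F\setminus R: R\subseteq F\in\mathcal{C}\}$ on $V\setminus R$. A minor is $\operatorname{link}_R(\mathcal{C}\setminus S)$ with $S\cap R=\emptyset$, $R$ a face. $\mathcal{C}$ is $\beta$-avoiding if no minor is isomorphic to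 any of: $P_4$ (on $\{1,2,3,4\}$, facets $12,23,34$); $O_6$ (on $\{1,\dots,6\}$, faces the subsets containing none of $\{1,2\},\{3,4\},\{5,6\}$) or $O_6^*$; $J_1$ (on $\{1,\dots,5\}$, facets $12,15,234,345$) or $J_1^*$ (facets $134,235,245$); $J_2$ (on $\{1,\dots,5\}$, facets $12,235,34,145$); $\partial\Delta_k\sqcup\{v\}$ for $k\ge1$ (all proper subsets of a $(k+1)$-set together with one extra isolated vertex). *)

theory Defs
  imports Main
begin

text \<open>A simplicial complex is represented as a pair (V, C): a finite ground set V
  and a family C of subsets of V closed under taking subsets.  Ghost vertices
  are elements v of V with {v} not in C.\<close>

type_synonym 'a complex = "'a set \<times> 'a set set"

definition simplicial_complex :: "'a complex \<Rightarrow> bool" where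
  "simplicial_complex K \<longleftrightarrow> finite (fst K) \<and> (\<forall>F\<in>snd K. F \<subseteq> fst K)
     \<and> (\<forall>F\<in>snd K. \<forall>G. G \<subseteq> F \<longrightarrow> G \<in> snd K)"

definition non_ghost :: "'a complex \<Rightarrow> 'a set" where
  "non_ghost K = {v \<in> fst K. {v} \<in> snd K}"

definition induced :: "'a complex \<Rightarrow> 'a set \<Rightarrow> 'a complex" where
  "induced K W = (W, {F \<in> snd K. F \<subseteq> W})"

definition deletion :: "'a complex \<Rightarrow> 'a set \<Rightarrow> 'a complex" where
  "deletion K S = induced K (fst K - S)"

definition link :: "'a complex \<Rightarrow> 'a set \<Rightarrow> 'a complex" where
  "link K R = (fst K - R, {F - R | F. F \<in> snd K \<and> R \<subseteq> F})"

definition alexander_dual :: "'a complex \<Rightarrow> 'a complex" where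
  "alexander_dual K = (fst K, {S. S \<subseteq> fst K \<and> fst K - S \<notin> snd K})"

definition iso :: "'a complex \<Rightarrow> 'b complex \<Rightarrow> bool" where
  "iso K L \<longleftrightarrow> (\<exists>f. bij_betw f (fst K) (fst L) \<and>
     (\<forall>F. F \<subseteq> fst K \<longrightarrow> (F \<in> snd K \<longleftrightarrow> f ` F \<in> snd L)))"

definition gen :: "'a set \<Rightarrow> 'a set set \<Rightarrow> 'a complex" where
  "gen V Fs = (V, {G. \<exists>F\<in>Fs. G \<subseteq> F})"

definition simplex :: "nat \<Rightarrow> nat complex" where
  "simplex k = ({0..k}, Pow {0..k})"

definition disj_union :: "'a complex \<Rightarrow> 'b complex \<Rightarrow> ('a + 'b) complex" where
  "disj_union K L = (Inl ` fst K \<union> Inr ` fst L,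
     {Inl ` F | F. F \<in> snd K} \<union> {Inr ` G | G. G \<in> snd L})"

definition D :: "nat \<Rightarrow> nat \<Rightarrow> (nat + nat) complex" where
  "D m n = alexander_dual (disj_union (simplex m) (simplex n))"

definition cone :: "nat \<Rightarrow> 'a complex \<Rightarrow> ('a + nat) complex" where
  "cone p K = (Inl ` fst K \<union> Inr ` {0..<p},
     {Inl ` F \<union> Inr ` U | F U. F \<in> snd K \<and> U \<subseteq> {0..<p}})"

definition P4 :: "nat complex" where
  "P4 = gen {1,2,3,4} {{1,2},{2,3},{3,4}}"

definition O6 :: "nat complex" where
  "O6 = ({1..6}, {F. F \<subseteq> {1..6} \<and> \<not> {1,2} \<subseteq> F \<and> \<not> {3,4} \<subseteq> F \<and> \<not> {5,6} \<subseteq> F})"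

definition J1 :: "nat complex" where
  "J1 = gen {1..5} {{1,2},{1,5},{2,3,4},{3,4,5}}"

definition J2 :: "nat complex" where
  "J2 = gen {1..5} {{1,2},{2,3,5},{3,4},{1,4,5}}"

definition bdry_plus_point :: "nat \<Rightarrow> nat complex" where
  "bdry_plus_point k = ({0..Suc k}, {F. F \<subset> {0..k}} \<union> {{Suc k}})"

definition beta_avoiding :: "'a complex \<Rightarrow> bool" where
  "beta_avoiding K \<longleftrightarrow> (\<forall>S R. S \<subseteq> fst K \<and> R \<subseteq> fst K \<and> S \<inter> R = {} \<and>
       R \<in> snd (deletion K S) \<longrightarrow>
       (let M = link (deletion K S) R in
         \<not> iso M P4 \<and> \<not> iso M O6 \<and> \<not> iso M (alexander_dual O6) \<and>
         \<not> iso M J1 \<and> \<not> iso M (alexander_dual J1) \<and> \<not> iso M J2 \<and>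
         (\<forall>k\<ge>1. \<not> iso M (bdry_plus_point k))))"

end

theory Submission
  imports Defs
begin

text \<open>Let the induced copy of D(m,n) have sides M and N, so that a subset of M \<union> N is a face
  iff it contains neither side. Call R a D-link on (M, N) if the same holds for the link of R.
  The key step: every vertex v of the link of R outside M \<union> N is a cone point over it, i.e.
  G \<union> R + v is a face for every face G of the D-link. When both sides have two elements this is
  a finite case analysis in which every failure exhibits P4, J1, J2 or \<partial>\<Delta>1 plus a point as a
  minor; for larger sides v has a neighbour w in M (otherwise the link on M + v is \<partial>\<Delta> plus a
  point), (M - w, N) is a D-link at R + w, and induction applies. Two cone points are adjacent,
  since otherwise restricting to two vertices on each side yields O6. By induction on T, every
  set T of non-ghost vertices outside M \<union> N is a face and the D-link persists at T, so a set of
  non-ghost vertices is a face iff its trace on M \<union> N is: a cone over D(m,n).\<close>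

lemma inj_on_image_subset_iff:
  assumes "inj_on f X" "A \<subseteq> X" "B \<subseteq> X"
  shows "f ` A \<subseteq> f ` B \<longleftrightarrow> A \<subseteq> B"
  using assms inj_on_image_mem_iff[OF assms(1)] by blast

lemma card_ge_2_not_subset_singleton: "2 \<le> card S \<Longrightarrow> \<not> S \<subseteq> {x}"
  using card_mono[of "{x}" S] by auto

lemma card_ge_2_obtain:
  assumes "2 \<le> card S"
  obtains x y where "x \<in> S" "y \<in> S" "x \<noteq> y"
  using assms card_ge_2_not_subset_singleton by (metis insert_subset subsetI)

section \<open>Isomorphisms of complexes\<close>

lemma iso_gen_facets:
  assumes bij: "bij_betw f X Y" and facets: "\<forall>F\<in>Fs. F \<subseteq> X"
    and faces: "\<And>G. G \<subseteq> X \<Longrightarrow> G \<in> A \<longleftrightarrow> (\<exists>F\<in>Fs. G \<subseteq> F)"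
  shows "iso (X, A) (gen Y ((`) f ` Fs))"
  unfolding iso_def gen_def fst_conv snd_conv
proof (intro exI[of _ f] conjI allI impI)
  fix G assume G: "G \<subseteq> X"
  have inj: "inj_on f X" using bij by (simp add: bij_betw_def)
  have "G \<in> A \<longleftrightarrow> (\<exists>F\<in>Fs. f ` G \<subseteq> f ` F)"
    using faces[OF G] inj_on_image_subset_iff[OF inj G] facets by auto
  then show "G \<in> A \<longleftrightarrow> f ` G \<in> {H. \<exists>F\<in>(`) f ` Fs. H \<subseteq> F}" by simp
qed (fact bij)

lemma iso_bdry_plus_point:
  assumes Z: "finite Z" "card Z = Suc k" and v: "v \<notin> Z"
  shows "iso (insert v Z, {G. G = {v} \<or> G \<subset> Z}) (bdry_plus_point k)"
proof -
  obtain g where g: "bij_betw g Z {0..k}"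
    using ex_bij_betw_finite_nat[OF Z(1)] Z(2) by (auto simp: atLeastLessThanSuc_atLeastAtMost)
  define f where "f x = (if x = v then Suc k else g x)" for x
  have fZ: "bij_betw f Z {0..k}"
  proof -
    have "bij_betw f Z {0..k} = bij_betw g Z {0..k}"
      by (rule bij_betw_cong) (use v in \<open>auto simp: f_def\<close>)
    then show ?thesis using g by simp
  qed
  have bij: "bij_betw f (insert v Z) {0..Suc k}"
    using bij_betw_combine[OF fZ, of "{v}" "{Suc k}"] by (auto simp: f_def bij_betw_def)
  have inj: "inj_on f (insert v Z)" using bij by (simp add: bij_betw_def)
  have "G = {v} \<or> G \<subset> Z \<longleftrightarrow> f ` G \<subset> {0..k} \<or> f ` G = {Suc k}" if G: "G \<subseteq> insert v Z" for G
  proof -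
    have "f ` G = {Suc k} \<longleftrightarrow> G = {v}"
      using inj_on_image_eq_iff[OF inj G, of "{v}"] by (simp add: f_def)
    moreover have "f ` G \<subset> {0..k} \<longleftrightarrow> G \<subset> Z"
      using inj_on_image_subset_iff[OF inj G, of Z] inj_on_image_eq_iff[OF inj G, of Z] fZ
      by (auto simp: bij_betw_def)
    ultimately show ?thesis by blast
  qed
  then show ?thesis
    unfolding iso_def bdry_plus_point_def using bij by (intro exI[of _ f]) auto
qed

lemma Inl_Inr_image_Un_eq_iff:
  "Inl ` A \<union> Inr ` B = Inl ` A' \<union> Inr ` B' \<longleftrightarrow> A = A' \<and> B = B'"
  by blast

lemma bij_betw_sum_cases:
  assumes "bij_betw f W X" "bij_betw g U Y" "W \<inter> U = {}"
  shows "bij_betw (\<lambda>x. if x \<in> W then Inl (f x) else Inr (g x)) (W \<union> U) (Inl ` X \<union> Inr ` Y)"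
proof (rule bij_betw_combine)
  have "bij_betw (Inl \<circ> f) W (Inl ` X)"
    by (rule bij_betw_trans[OF assms(1)]) (simp add: bij_betw_def)
  then show "bij_betw (\<lambda>x. if x \<in> W then Inl (f x) else Inr (g x)) W (Inl ` X)"
    by (rule bij_betw_cong[THEN iffD1, rotated]) simp
  have "bij_betw (Inr \<circ> g) U (Inr ` Y)"
    by (rule bij_betw_trans[OF assms(2)]) (simp add: bij_betw_def)
  then show "bij_betw (\<lambda>x. if x \<in> W then Inl (f x) else Inr (g x)) U (Inr ` Y)"
    by (rule bij_betw_cong[THEN iffD1, rotated]) (use assms(3) in auto)
qed blast

lemma iso_cone:
  assumes iso: "iso (W, B) L" and WU: "W \<inter> U = {}" and U: "finite U"
    and faces: "\<And>F. F \<subseteq> W \<union> U \<Longrightarrow> F \<in> A \<longleftrightarrow> F \<inter> W \<in> B"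
  shows "iso (W \<union> U, A) (cone (card U) L)"
proof -
  obtain f where f: "bij_betw f W (fst L)" and fB: "\<And>F. F \<subseteq> W \<Longrightarrow> F \<in> B \<longleftrightarrow> f ` F \<in> snd L"
    using iso unfolding iso_def by auto
  obtain g where g: "bij_betw g U {0..<card U}" using ex_bij_betw_finite_nat[OF U] by blast
  define h where "h x = (if x \<in> W then Inl (f x) else Inr (g x))" for x
  have h: "bij_betw h (W \<union> U) (fst (cone (card U) L))"
    unfolding h_def cone_def fst_conv by (rule bij_betw_sum_cases[OF f g WU])
  have "F \<in> A \<longleftrightarrow> h ` F \<in> snd (cone (card U) L)" if F: "F \<subseteq> W \<union> U" for F
  proof -
    have "h ` F = h ` (F \<inter> W) \<union> h ` (F \<inter> U)" using F by blast
    also have "\<dots> = Inl ` f ` (F \<inter> W) \<union> Inr ` g ` (F \<inter> U)"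
      using WU unfolding h_def by force
    finally have hF: "h ` F = Inl ` f ` (F \<inter> W) \<union> Inr ` g ` (F \<inter> U)" .
    have "g ` (F \<inter> U) \<subseteq> {0..<card U}" using g by (auto simp: bij_betw_def)
    then have "h ` F \<in> snd (cone (card U) L) \<longleftrightarrow> f ` (F \<inter> W) \<in> snd L"
      by (simp add: hF cone_def Inl_Inr_image_Un_eq_iff)
    then show ?thesis using faces[OF F] fB[of "F \<inter> W"] by blast
  qed
  then show ?thesis
    using h unfolding iso_def by (intro exI[of _ h]) (simp add: cone_def)
qed

lemma D_ground: "fst (D m n) = Inl ` {0..m} \<union> Inr ` {0..n}"
  by (simp add: D_def alexander_dual_def disj_union_def simplex_def)

lemma D_face_iff:
  assumes "S \<subseteq> Inl ` {0..m} \<union> Inr ` {0..n}"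
  shows "S \<in> snd (D m n) \<longleftrightarrow> \<not> Inl ` {0..m} \<subseteq> S \<and> \<not> Inr ` {0..n} \<subseteq> S"
proof -
  let ?G = "Inl ` {0..m} \<union> Inr ` {0..n} :: (nat + nat) set"
  have D: "snd (D m n) = {S. S \<subseteq> ?G \<and> \<not> ?G - S \<subseteq> Inl ` {0..m} \<and> \<not> ?G - S \<subseteq> Inr ` {0..n}}"
    unfolding subset_image_iff by (auto simp: D_def alexander_dual_def disj_union_def simplex_def)
  have "?G - S \<subseteq> Inl ` {0..m} \<longleftrightarrow> Inr ` {0..n} \<subseteq> S"
    "?G - S \<subseteq> Inr ` {0..n} \<longleftrightarrow> Inl ` {0..m} \<subseteq> S" by auto
  then show ?thesis unfolding D mem_Collect_eq using assms by blast
qed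

lemma iso_D_sides:
  assumes "iso (W, A) (D m n)"
  obtains M N where "M \<inter> N = {}" "M \<union> N = W" "card M = Suc m" "card N = Suc n"
    "\<And>G. G \<subseteq> W \<Longrightarrow> G \<in> A \<longleftrightarrow> \<not> M \<subseteq> G \<and> \<not> N \<subseteq> G"
proof -
  obtain f where f: "bij_betw f W (Inl ` {0..m} \<union> Inr ` {0..n})"
    and faces: "\<And>G. G \<subseteq> W \<Longrightarrow> G \<in> A \<longleftrightarrow> f ` G \<in> snd (D m n)"
    using assms unfolding iso_def D_ground by auto
  have inj: "inj_on f W" and fW: "f ` W = Inl ` {0..m} \<union> Inr ` {0..n}"
    using f by (auto simp: bij_betw_def)
  define M where "M = {w \<in> W. f w \<in> Inl ` {0..m}}"
  define N where "N = {w \<in> W. f w \<in> Inr ` {0..n}}"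
  have MW: "M \<subseteq> W" and NW: "N \<subseteq> W" unfolding M_def N_def by auto
  have fM: "f ` M = Inl ` {0..m}" and fN: "f ` N = Inr ` {0..n}"
    unfolding M_def N_def using fW by force+
  show thesis
  proof (rule that)
    show "M \<inter> N = {}" "M \<union> N = W" unfolding M_def N_def using fW by auto
    show "card M = Suc m"
      using card_image[OF inj_on_subset[OF inj MW]] by (simp add: fM card_image)
    show "card N = Suc n"
      using card_image[OF inj_on_subset[OF inj NW]] by (simp add: fN card_image)
    fix G assume G: "G \<subseteq> W"
    have fG: "f ` G \<subseteq> Inl ` {0..m} \<union> Inr ` {0..n}" using G fW by blast
    have "G \<in> A \<longleftrightarrow> \<not> f ` M \<subseteq> f ` G \<and> \<not> f ` N \<subseteq> f ` G"
      unfolding faces[OF G] D_face_iff[OF fG] fM fN ..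
    then show "G \<in> A \<longleftrightarrow> \<not> M \<subseteq> G \<and> \<not> N \<subseteq> G"
      using inj_on_image_subset_iff[OF inj MW G] inj_on_image_subset_iff[OF inj NW G] by simp
  qed
qed

section \<open>Forbidden minors in restricted links\<close>

locale beta_avoiding_complex =
  fixes V :: "'a set" and C :: "'a set set"
  assumes simplicial: "simplicial_complex (V, C)" and beta: "beta_avoiding (V, C)"
begin

lemma finite_ground: "finite V"
  using simplicial by (simp add: simplicial_complex_def)

lemma face_subset_ground: "F \<in> C \<Longrightarrow> F \<subseteq> V"
  using simplicial by (auto simp: simplicial_complex_def)

lemma face_subset: "F \<in> C \<Longrightarrow> G \<subseteq> F \<Longrightarrow> G \<in> C"
  using simplicial by (auto simp: simplicial_complex_def)

lemma nonface_superset: "F \<notin> C \<Longrightarrow> F \<subseteq> G \<Longrightarrow> G \<notin> C"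
  using face_subset by blast

definition link_on :: "'a set \<Rightarrow> 'a set \<Rightarrow> 'a complex" where
  "link_on R X = (X, {G. G \<subseteq> X \<and> G \<union> R \<in> C})"

lemma link_on_minor:
  assumes "R \<in> C" "X \<subseteq> V" "X \<inter> R = {}"
  shows "link_on R X = link (deletion (V, C) (V - X - R)) R"
proof -
  have "R \<subseteq> V" using assms(1) face_subset_ground by blast
  then have ground: "V - (V - X - R) = X \<union> R" using assms(2) by blast
  have faces: "{F - R |F. F \<in> {F \<in> C. F \<subseteq> X \<union> R} \<and> R \<subseteq> F} = {G. G \<subseteq> X \<and> G \<union> R \<in> C}"
  proof (intro equalityI subsetI)
    fix G assume "G \<in> {F - R |F. F \<in> {F \<in> C. F \<subseteq> X \<union> R} \<and> R \<subseteq> F}"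
    then obtain F where "G = F - R" "F \<in> C" "F \<subseteq> X \<union> R" "R \<subseteq> F" by blast
    moreover have "F - R \<union> R = F" using \<open>R \<subseteq> F\<close> by blast
    ultimately show "G \<in> {G. G \<subseteq> X \<and> G \<union> R \<in> C}" by auto
  next
    fix G assume G: "G \<in> {G. G \<subseteq> X \<and> G \<union> R \<in> C}"
    then have "G = (G \<union> R) - R" "G \<union> R \<subseteq> X \<union> R" using assms(3) by auto
    with G show "G \<in> {F - R |F. F \<in> {F \<in> C. F \<subseteq> X \<union> R} \<and> R \<subseteq> F}" by blast
  qed
  have "X \<union> R - R = X" using assms(3) by blast
  then show ?thesis
    unfolding link_on_def link_def deletion_def induced_def fst_conv snd_conv ground faces by simp
qed

lemma link_on_not_forbidden:
  assumes "R \<in> C" "X \<subseteq> V" "X \<inter> R = {}"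
  shows "\<not> iso (link_on R X) P4" "\<not> iso (link_on R X) O6" "\<not> iso (link_on R X) J1"
    "\<not> iso (link_on R X) J2" "k \<ge> 1 \<Longrightarrow> \<not> iso (link_on R X) (bdry_plus_point k)"
proof -
  have "R \<subseteq> V" using assms(1) face_subset_ground by blast
  then have "let M = link (deletion (V, C) (V - X - R)) R in
      \<not> iso M P4 \<and> \<not> iso M O6 \<and> \<not> iso M (alexander_dual O6) \<and>
      \<not> iso M J1 \<and> \<not> iso M (alexander_dual J1) \<and> \<not> iso M J2 \<and>
      (\<forall>k\<ge>1. \<not> iso M (bdry_plus_point k))"
    using assms by (intro beta[unfolded beta_avoiding_def fst_conv, rule_format])
      (auto simp: deletion_def induced_def)
  then show "\<not> iso (link_on R X) P4" "\<not> iso (link_on R X) O6" "\<not> iso (link_on R X) J1"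
    "\<not> iso (link_on R X) J2" "k \<ge> 1 \<Longrightarrow> \<not> iso (link_on R X) (bdry_plus_point k)"
    unfolding Let_def link_on_minor[OF assms, symmetric] by simp_all
qed

lemma link_on_iso_gen:
  assumes bij: "bij_betw f X Y" and facets: "\<forall>F\<in>Fs. F \<subseteq> X \<and> F \<union> R \<in> C"
    and nonfaces: "\<forall>Q\<in>Ns. Q \<union> R \<notin> C"
    and cover: "\<And>G. G \<subseteq> X \<Longrightarrow> \<forall>Q\<in>Ns. \<not> Q \<subseteq> G \<Longrightarrow> \<exists>F\<in>Fs. G \<subseteq> F"
  shows "iso (link_on R X) (gen Y ((`) f ` Fs))"
  unfolding link_on_def
proof (rule iso_gen_facets[OF bij])
  show "\<forall>F\<in>Fs. F \<subseteq> X" using facets by blast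
  fix G assume G: "G \<subseteq> X"
  show "G \<in> {G. G \<subseteq> X \<and> G \<union> R \<in> C} \<longleftrightarrow> (\<exists>F\<in>Fs. G \<subseteq> F)"
  proof
    assume "G \<in> {G. G \<subseteq> X \<and> G \<union> R \<in> C}"
    then have GR: "G \<union> R \<in> C" by simp
    have "\<not> Q \<subseteq> G" if "Q \<in> Ns" for Q
      using nonfaces that face_subset[OF GR, of "Q \<union> R"] by blast
    then show "\<exists>F\<in>Fs. G \<subseteq> F" using cover[OF G] by blast
  next
    assume "\<exists>F\<in>Fs. G \<subseteq> F"
    then obtain F where "F \<in> Fs" "G \<subseteq> F" by blast
    then have "G \<union> R \<in> C" using facets face_subset[of "F \<union> R" "G \<union> R"] by blast
    then show "G \<in> {G. G \<subseteq> X \<and> G \<union> R \<in> C}" using G by simp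
  qed
qed

lemma no_P4_link:
  assumes R: "R \<in> C" and d: "distinct [p1, p2, p3, p4]"
    and X: "{p1, p2, p3, p4} \<subseteq> V" "{p1, p2, p3, p4} \<inter> R = {}"
    and faces: "{p1, p2} \<union> R \<in> C" "{p2, p3} \<union> R \<in> C" "{p3, p4} \<union> R \<in> C"
    and nonfaces: "{p1, p3} \<union> R \<notin> C" "{p2, p4} \<union> R \<notin> C" "{p1, p4} \<union> R \<notin> C"
  shows False
proof -
  define f where "f x = (if x = p1 then 1 else if x = p2 then 2 else if x = p3 then 3 else 4 :: nat)" for x
  have fv: "f p1 = 1" "f p2 = 2" "f p3 = 3" "f p4 = 4" using d by (auto simp: f_def)
  have "iso (link_on R {p1, p2, p3, p4}) (gen {1, 2, 3, 4} ((`) f ` {{p1, p2}, {p2, p3}, {p3, p4}}))"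
  proof (rule link_on_iso_gen[where Ns = "{{p1, p3}, {p2, p4}, {p1, p4}}"])
    show "bij_betw f {p1, p2, p3, p4} {1, 2, 3, 4}"
      using d unfolding bij_betw_def inj_on_def by (auto simp: fv)
    fix G assume "G \<subseteq> {p1, p2, p3, p4}" "\<forall>Q\<in>{{p1, p3}, {p2, p4}, {p1, p4}}. \<not> Q \<subseteq> G"
    then show "\<exists>F\<in>{{p1, p2}, {p2, p3}, {p3, p4}}. G \<subseteq> F"
      by (cases "p1 \<in> G"; cases "p2 \<in> G"; cases "p3 \<in> G"; cases "p4 \<in> G") auto
  qed (use faces nonfaces in auto)
  moreover have "gen {1, 2, 3, 4} ((`) f ` {{p1, p2}, {p2, p3}, {p3, p4}}) = P4"
    unfolding P4_def by (simp add: fv)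
  ultimately show False using link_on_not_forbidden(1)[OF R X] by simp
qed

lemma no_J1_link:
  assumes R: "R \<in> C" and d: "distinct [p1, p2, p3, p4, p5]"
    and X: "{p1, p2, p3, p4, p5} \<subseteq> V" "{p1, p2, p3, p4, p5} \<inter> R = {}"
    and faces: "{p1, p2} \<union> R \<in> C" "{p1, p5} \<union> R \<in> C" "{p2, p3, p4} \<union> R \<in> C" "{p3, p4, p5} \<union> R \<in> C"
    and nonfaces: "{p1, p3} \<union> R \<notin> C" "{p1, p4} \<union> R \<notin> C" "{p2, p5} \<union> R \<notin> C"
  shows False
proof -
  define f where
    "f x = (if x = p1 then 1 else if x = p2 then 2 else if x = p3 then 3 else if x = p4 then 4 else 5 :: nat)" for x
  have fv: "f p1 = 1" "f p2 = 2" "f p3 = 3" "f p4 = 4" "f p5 = 5" using d by (auto simp: f_def)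
  have "iso (link_on R {p1, p2, p3, p4, p5})
      (gen {1, 2, 3, 4, 5} ((`) f ` {{p1, p2}, {p1, p5}, {p2, p3, p4}, {p3, p4, p5}}))"
  proof (rule link_on_iso_gen[where Ns = "{{p1, p3}, {p1, p4}, {p2, p5}}"])
    show "bij_betw f {p1, p2, p3, p4, p5} {1, 2, 3, 4, 5}"
      using d unfolding bij_betw_def inj_on_def by (auto simp: fv)
    fix G assume "G \<subseteq> {p1, p2, p3, p4, p5}" "\<forall>Q\<in>{{p1, p3}, {p1, p4}, {p2, p5}}. \<not> Q \<subseteq> G"
    then show "\<exists>F\<in>{{p1, p2}, {p1, p5}, {p2, p3, p4}, {p3, p4, p5}}. G \<subseteq> F"
      by (cases "p1 \<in> G"; cases "p2 \<in> G"; cases "p3 \<in> G"; cases "p4 \<in> G"; cases "p5 \<in> G") auto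
  qed (use faces nonfaces in auto)
  moreover have "gen {1, 2, 3, 4, 5} ((`) f ` {{p1, p2}, {p1, p5}, {p2, p3, p4}, {p3, p4, p5}}) = J1"
  proof -
    have "{1..5 :: nat} = {1, 2, 3, 4, 5}" by auto
    then show ?thesis unfolding J1_def by (simp add: fv)
  qed
  ultimately show False using link_on_not_forbidden(3)[OF R X] by simp
qed

lemma no_J2_link:
  assumes R: "R \<in> C" and d: "distinct [p1, p2, p3, p4, p5]"
    and X: "{p1, p2, p3, p4, p5} \<subseteq> V" "{p1, p2, p3, p4, p5} \<inter> R = {}"
    and faces: "{p1, p2} \<union> R \<in> C" "{p2, p3, p5} \<union> R \<in> C" "{p3, p4} \<union> R \<in> C" "{p1, p4, p5} \<union> R \<in> C"
    and nonfaces: "{p1, p3} \<union> R \<notin> C" "{p2, p4} \<union> R \<notin> C" "{p1, p2, p5} \<union> R \<notin> C" "{p3, p4, p5} \<union> R \<notin> C"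
  shows False
proof -
  define f where
    "f x = (if x = p1 then 1 else if x = p2 then 2 else if x = p3 then 3 else if x = p4 then 4 else 5 :: nat)" for x
  have fv: "f p1 = 1" "f p2 = 2" "f p3 = 3" "f p4 = 4" "f p5 = 5" using d by (auto simp: f_def)
  have "iso (link_on R {p1, p2, p3, p4, p5})
      (gen {1, 2, 3, 4, 5} ((`) f ` {{p1, p2}, {p2, p3, p5}, {p3, p4}, {p1, p4, p5}}))"
  proof (rule link_on_iso_gen[where Ns = "{{p1, p3}, {p2, p4}, {p1, p2, p5}, {p3, p4, p5}}"])
    show "bij_betw f {p1, p2, p3, p4, p5} {1, 2, 3, 4, 5}"
      using d unfolding bij_betw_def inj_on_def by (auto simp: fv)
    fix G assume "G \<subseteq> {p1, p2, p3, p4, p5}"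
      "\<forall>Q\<in>{{p1, p3}, {p2, p4}, {p1, p2, p5}, {p3, p4, p5}}. \<not> Q \<subseteq> G"
    then show "\<exists>F\<in>{{p1, p2}, {p2, p3, p5}, {p3, p4}, {p1, p4, p5}}. G \<subseteq> F"
      by (cases "p1 \<in> G"; cases "p2 \<in> G"; cases "p3 \<in> G"; cases "p4 \<in> G"; cases "p5 \<in> G") auto
  qed (use faces nonfaces in auto)
  moreover have "gen {1, 2, 3, 4, 5} ((`) f ` {{p1, p2}, {p2, p3, p5}, {p3, p4}, {p1, p4, p5}}) = J2"
  proof -
    have "{1..5 :: nat} = {1, 2, 3, 4, 5}" by auto
    then show ?thesis unfolding J2_def by (simp add: fv)
  qed
  ultimately show False using link_on_not_forbidden(4)[OF R X] by simp
qed

lemma no_O6_link: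
  assumes R: "R \<in> C" and d: "distinct [p1, p2, p3, p4, p5, p6]"
    and X: "{p1, p2, p3, p4, p5, p6} \<subseteq> V" "{p1, p2, p3, p4, p5, p6} \<inter> R = {}"
    and faces: "\<And>G. G \<subseteq> {p1, p2, p3, p4, p5, p6} \<Longrightarrow>
       G \<union> R \<in> C \<longleftrightarrow> \<not> {p1, p2} \<subseteq> G \<and> \<not> {p3, p4} \<subseteq> G \<and> \<not> {p5, p6} \<subseteq> G"
  shows False
proof -
  let ?X = "{p1, p2, p3, p4, p5, p6}"
  define f where "f x = (if x = p1 then 1 else if x = p2 then 2 else if x = p3 then 3
    else if x = p4 then 4 else if x = p5 then 5 else 6 :: nat)" for x
  have fv: "f p1 = 1" "f p2 = 2" "f p3 = 3" "f p4 = 4" "f p5 = 5" "f p6 = 6"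
    using d by (auto simp: f_def)
  have bij: "bij_betw f ?X {1..6}"
  proof -
    have "{1..6 :: nat} = {1, 2, 3, 4, 5, 6}" by auto
    then show ?thesis using d unfolding bij_betw_def inj_on_def by (auto simp: fv)
  qed
  have inj: "inj_on f ?X" using bij by (simp add: bij_betw_def)
  have "iso (link_on R ?X) O6"
    unfolding iso_def link_on_def O6_def fst_conv snd_conv
  proof (intro exI[of _ f] conjI allI impI)
    fix G assume G: "G \<subseteq> ?X"
    have sub: "f ` {p1, p2} \<subseteq> f ` G \<longleftrightarrow> {p1, p2} \<subseteq> G"
      "f ` {p3, p4} \<subseteq> f ` G \<longleftrightarrow> {p3, p4} \<subseteq> G" "f ` {p5, p6} \<subseteq> f ` G \<longleftrightarrow> {p5, p6} \<subseteq> G"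
      by (rule inj_on_image_subset_iff[OF inj _ G]; simp)+
    have pairs: "{1, 2} = f ` {p1, p2}" "{3, 4} = f ` {p3, p4}" "{5, 6} = f ` {p5, p6}"
      by (simp_all add: fv)
    have "f ` G \<subseteq> {1..6}" using bij G by (auto simp: bij_betw_def)
    then show "G \<in> {G. G \<subseteq> ?X \<and> G \<union> R \<in> C} \<longleftrightarrow>
      f ` G \<in> {F. F \<subseteq> {1..6} \<and> \<not> {1, 2} \<subseteq> F \<and> \<not> {3, 4} \<subseteq> F \<and> \<not> {5, 6} \<subseteq> F}"
      unfolding mem_Collect_eq pairs sub using faces[OF G] G by blast
  qed (fact bij)
  then show False using link_on_not_forbidden(2)[OF R X] by simp
qed

lemma missing_face_has_neighbour:
  assumes R: "R \<in> C" and Z: "2 \<le> card Z" "Z \<subseteq> V" "Z \<inter> R = {}"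
    and v: "v \<in> V" "v \<notin> Z" "v \<notin> R" "insert v R \<in> C"
    and facets: "\<And>z. z \<in> Z \<Longrightarrow> (Z - {z}) \<union> R \<in> C" and nonface: "Z \<union> R \<notin> C"
  shows "\<exists>z\<in>Z. insert z (insert v R) \<in> C"
proof (rule ccontr)
  assume no_neighbour: "\<not> ?thesis"
  have "G \<union> R \<in> C \<longleftrightarrow> G = {v} \<or> G \<subset> Z" if G: "G \<subseteq> insert v Z" for G
  proof (cases "v \<in> G")
    case True
    have "G \<union> R \<notin> C" if "G \<noteq> {v}"
    proof -
      obtain z where z: "z \<in> G" "z \<noteq> v" using True \<open>G \<noteq> {v}\<close> by blast
      then have "z \<in> Z" "insert z (insert v R) \<subseteq> G \<union> R" using G True by auto
      then show ?thesis using no_neighbour nonface_superset by blast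
    qed
    then show ?thesis using True v(2,4) by auto
  next
    case False
    then have GZ: "G \<subseteq> Z" using G by blast
    have "G \<union> R \<in> C" if "G \<noteq> Z"
    proof -
      obtain z where "z \<in> Z" "z \<notin> G" using GZ \<open>G \<noteq> Z\<close> by blast
      then have "G \<union> R \<subseteq> (Z - {z}) \<union> R" using GZ by blast
      then show ?thesis using face_subset facets[OF \<open>z \<in> Z\<close>] by blast
    qed
    then show ?thesis using False GZ nonface by auto
  qed
  then have "link_on R (insert v Z) = (insert v Z, {G. G = {v} \<or> G \<subset> Z})"
    unfolding link_on_def by auto
  moreover have "finite Z" "card Z = Suc (card Z - 1)" using Z(1) card.infinite by force+
  ultimately have "iso (link_on R (insert v Z)) (bdry_plus_point (card Z - 1))"
    using iso_bdry_plus_point[of Z "card Z - 1" v] v(2) by simp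
  moreover have "insert v Z \<subseteq> V" "insert v Z \<inter> R = {}" "1 \<le> card Z - 1"
    using Z v by auto
  ultimately show False using link_on_not_forbidden(5)[OF R, of "insert v Z" "card Z - 1"] by simp
qed

lemma adjacent_to_missing_edge:
  assumes R: "R \<in> C" and d: "y1 \<noteq> y2" "v \<noteq> y1" "v \<noteq> y2" and V: "y1 \<in> V" "y2 \<in> V" "v \<in> V"
    and notin: "y1 \<notin> R" "y2 \<notin> R" "v \<notin> R"
    and faces: "insert y1 R \<in> C" "insert y2 R \<in> C" "insert v R \<in> C"
    and nonface: "insert y1 (insert y2 R) \<notin> C"
  shows "insert y1 (insert v R) \<in> C \<or> insert y2 (insert v R) \<in> C"
proof -
  have "\<exists>z\<in>{y1, y2}. insert z (insert v R) \<in> C"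
  proof (rule missing_face_has_neighbour[OF R])
    show "2 \<le> card {y1, y2}" using d(1) by simp
    show "{y1, y2} \<subseteq> V" "{y1, y2} \<inter> R = {}" "v \<in> V" "v \<notin> {y1, y2}" "v \<notin> R"
      using d V notin by auto
    show "insert v R \<in> C" "{y1, y2} \<union> R \<notin> C" using faces(3) nonface by simp_all
    fix z assume "z \<in> {y1, y2}"
    then consider "z = y1" | "z = y2" by blast
    then show "{y1, y2} - {z} \<union> R \<in> C"
      by cases (use d(1) faces(1,2) in \<open>simp_all add: insert_Diff_if\<close>)
  qed
  then show ?thesis by blast
qed

section \<open>D-links and cone points\<close>

text \<open>The link of R restricted to M \<union> N is a copy of D with sides M and N (cf. D_face_iff).\<close>
definition D_link :: "'a set \<Rightarrow> 'a set \<Rightarrow> 'a set \<Rightarrow> bool" where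
  "D_link R M N \<longleftrightarrow> R \<in> C \<and> M \<inter> N = {} \<and> (M \<union> N) \<inter> R = {} \<and> M \<union> N \<subseteq> V \<and>
     (\<forall>G\<subseteq>M \<union> N. G \<union> R \<in> C \<longleftrightarrow> \<not> M \<subseteq> G \<and> \<not> N \<subseteq> G)"

definition cone_point :: "'a set \<Rightarrow> 'a set \<Rightarrow> 'a set \<Rightarrow> 'a \<Rightarrow> bool" where
  "cone_point R M N v \<longleftrightarrow> (\<forall>G\<subseteq>M \<union> N. \<not> M \<subseteq> G \<longrightarrow> \<not> N \<subseteq> G \<longrightarrow> insert v (G \<union> R) \<in> C)"

lemma D_link_sym: "D_link R M N \<Longrightarrow> D_link R N M"
  unfolding D_link_def by (simp add: Un_commute Int_commute conj_commute)

lemma cone_point_sym: "cone_point R M N v \<Longrightarrow> cone_point R N M v"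
  unfolding cone_point_def by (simp add: Un_commute conj_commute)

lemma D_linkD:
  assumes "D_link R M N"
  shows "R \<in> C" "M \<inter> N = {}" "(M \<union> N) \<inter> R = {}" "M \<union> N \<subseteq> V"
    "G \<subseteq> M \<union> N \<Longrightarrow> G \<union> R \<in> C \<longleftrightarrow> \<not> M \<subseteq> G \<and> \<not> N \<subseteq> G"
  using assms unfolding D_link_def by simp_all

lemma D_link_finite:
  assumes "D_link R M N" shows "finite M" "finite N"
proof -
  have "finite (M \<union> N)" by (rule finite_subset[OF D_linkD(4)[OF assms] finite_ground])
  then show "finite M" "finite N" by simp_all
qed

lemma D_link_link:
  assumes D: "D_link R M N" and w: "w \<in> M" and M: "2 \<le> card M" and N: "N \<noteq> {}"
  shows "D_link (insert w R) (M - {w}) N"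
  unfolding D_link_def
proof (intro conjI allI impI)
  have wN: "w \<notin> N" using D_linkD(2)[OF D] w by blast
  have "\<not> M \<subseteq> {w}" using card_ge_2_not_subset_singleton[OF M] .
  then show "insert w R \<in> C" using D_linkD(5)[OF D, of "{w}"] w wN N by auto
  show "(M - {w}) \<inter> N = {}" using D_linkD(2)[OF D] by blast
  show "(M - {w} \<union> N) \<inter> insert w R = {}" using D_linkD(3)[OF D] wN by blast
  show "M - {w} \<union> N \<subseteq> V" using D_linkD(4)[OF D] by blast
  fix G assume G: "G \<subseteq> M - {w} \<union> N"
  have "insert w G \<subseteq> M \<union> N" using G w by blast
  moreover have "M \<subseteq> insert w G \<longleftrightarrow> M - {w} \<subseteq> G" "N \<subseteq> insert w G \<longleftrightarrow> N \<subseteq> G"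
    using wN by blast+
  ultimately show "G \<union> insert w R \<in> C \<longleftrightarrow> \<not> M - {w} \<subseteq> G \<and> \<not> N \<subseteq> G"
    using D_linkD(5)[OF D, of "insert w G"] by simp
qed

lemma D_link_pairsD:
  assumes "D_link R {a1, a2} {b1, b2}"
  shows "R \<in> C" "a1 \<noteq> b1" "a1 \<noteq> b2" "a2 \<noteq> b1" "a2 \<noteq> b2"
    "a1 \<notin> R" "a2 \<notin> R" "b1 \<notin> R" "b2 \<notin> R" "a1 \<in> V" "a2 \<in> V" "b1 \<in> V" "b2 \<in> V"
    "G \<subseteq> {a1, a2, b1, b2} \<Longrightarrow> G \<union> R \<in> C \<longleftrightarrow> \<not> {a1, a2} \<subseteq> G \<and> \<not> {b1, b2} \<subseteq> G"
proof -
  have "{a1, a2} \<union> {b1, b2} = {a1, a2, b1, b2}" by auto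
  then show "G \<subseteq> {a1, a2, b1, b2} \<Longrightarrow> G \<union> R \<in> C \<longleftrightarrow> \<not> {a1, a2} \<subseteq> G \<and> \<not> {b1, b2} \<subseteq> G"
    using D_linkD(5)[OF assms, of G] by simp
qed (use D_linkD(1-4)[OF assms] in auto)

section \<open>Cone points over a square\<close>

lemma square_nonneighbour_adjacent:
  assumes D: "D_link R {a1, a2} {b, b'}" and d: "a1 \<noteq> a2" "b \<noteq> b'"
    and v: "v \<in> V" "v \<notin> {a1, a2, b, b'}" "v \<notin> R"
    and na1: "insert a1 (insert v R) \<notin> C" and va2: "insert a2 (insert v R) \<in> C"
  shows "insert b' (insert v R) \<in> C"
proof (rule ccontr)
  assume nb': "insert b' (insert v R) \<notin> C"
  note F = D_link_pairsD[OF D]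
  show False
  proof (rule no_P4_link[OF F(1), of v a2 b' a1])
    show "distinct [v, a2, b', a1]" using d F v by auto
    show "{v, a2, b', a1} \<subseteq> V" "{v, a2, b', a1} \<inter> R = {}" using v F(6-13) by auto
    show "{v, a2} \<union> R \<in> C" using va2 by (simp add: insert_commute)
    show "{a2, b'} \<union> R \<in> C" "{b', a1} \<union> R \<in> C"
      using F(14)[of "{a2, b'}"] F(14)[of "{a1, b'}"] F(2-5) d by (auto simp: insert_commute)
    show "{v, b'} \<union> R \<notin> C" using nb' by (simp add: insert_commute)
    show "{a2, a1} \<union> R \<notin> C" using F(14)[of "{a1, a2}"] by (simp add: insert_commute)
    show "{v, a1} \<union> R \<notin> C" using na1 by (simp add: insert_commute)
  qed
qed

lemma square_nonneighbour_no_triangle: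
  assumes D: "D_link R {a1, a2} {b, b'}" and d: "a1 \<noteq> a2" "b \<noteq> b'"
    and v: "v \<in> V" "v \<notin> {a1, a2, b, b'}" "v \<notin> R"
    and na1: "insert a1 (insert v R) \<notin> C"
  shows "insert b (insert v (insert a2 R)) \<notin> C"
proof
  assume a2b: "insert b (insert v (insert a2 R)) \<in> C"
  note F = D_link_pairsD[OF D]
  have va2: "insert a2 (insert v R) \<in> C" by (rule face_subset[OF a2b]) blast
  have vb': "insert b' (insert v R) \<in> C"
    by (rule square_nonneighbour_adjacent[OF D d v na1 va2])
  have e: "{a1, b} \<union> R \<in> C" "{a1, b'} \<union> R \<in> C" "insert a1 (insert b' R) \<in> C"
    "insert a2 (insert b' R) \<in> C"
    using F(14)[of "{a1, b}"] F(14)[of "{a1, b'}"] F(14)[of "{a2, b'}"] F(2-5) d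
    by (auto simp: insert_commute)
  have n: "{a1, a2} \<union> R \<notin> C" "{b, b'} \<union> R \<notin> C"
    using F(14)[of "{a1, a2}"] F(14)[of "{b, b'}"] by simp_all
  have "insert a1 (insert v (insert b' R)) \<in> C \<or> insert a2 (insert v (insert b' R)) \<in> C"
  proof (rule adjacent_to_missing_edge)
    show "insert b' R \<in> C" by (rule face_subset[OF vb']) blast
    show "a1 \<noteq> a2" "v \<noteq> a1" "v \<noteq> a2" "a1 \<in> V" "a2 \<in> V" "v \<in> V"
      "a1 \<notin> insert b' R" "a2 \<notin> insert b' R" "v \<notin> insert b' R"
      using d F v by auto
    show "insert a1 (insert b' R) \<in> C" "insert a2 (insert b' R) \<in> C"
      using e(3,4) by simp_all
    show "insert v (insert b' R) \<in> C" using vb' by (simp add: insert_commute)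
    show "insert a1 (insert a2 (insert b' R)) \<notin> C" by (rule nonface_superset[OF n(1)]) blast
  qed
  moreover have "insert a1 (insert v (insert b' R)) \<notin> C" by (rule nonface_superset[OF na1]) blast
  ultimately have a2b': "insert a2 (insert v (insert b' R)) \<in> C" by blast
  show False
  proof (rule no_J1_link[OF F(1), of a1 b v a2 b'])
    show "distinct [a1, b, v, a2, b']" using d F v by auto
    show "{a1, b, v, a2, b'} \<subseteq> V" "{a1, b, v, a2, b'} \<inter> R = {}" using v F by auto
    show "{a1, b} \<union> R \<in> C" "{a1, b'} \<union> R \<in> C" using e(1,2) by simp_all
    show "{b, v, a2} \<union> R \<in> C" using a2b by (simp add: insert_commute)
    show "{v, a2, b'} \<union> R \<in> C" using a2b' by (simp add: insert_commute)
    show "{a1, v} \<union> R \<notin> C" using na1 by simp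
    show "{a1, a2} \<union> R \<notin> C" "{b, b'} \<union> R \<notin> C" using n by simp_all
  qed
qed

lemma square_neighbour:
  assumes D: "D_link R {a1, a2} {b1, b2}" and d: "a1 \<noteq> a2" "b1 \<noteq> b2"
    and v: "v \<in> V" "v \<notin> {a1, a2, b1, b2}" "v \<notin> R" "insert v R \<in> C"
  shows "insert a1 (insert v R) \<in> C"
proof (rule ccontr)
  assume na1: "insert a1 (insert v R) \<notin> C"
  note F = D_link_pairsD[OF D]
  have "insert a1 (insert v R) \<in> C \<or> insert a2 (insert v R) \<in> C"
  proof (rule adjacent_to_missing_edge[OF F(1)])
    show "a1 \<noteq> a2" "v \<noteq> a1" "v \<noteq> a2" "a1 \<in> V" "a2 \<in> V" "v \<in> V" "a1 \<notin> R" "a2 \<notin> R" "v \<notin> R"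
      "insert v R \<in> C" using F d v by auto
    show "insert a1 R \<in> C" "insert a2 R \<in> C"
      using F(14)[of "{a1}"] F(14)[of "{a2}"] F(2-5) d by auto
    show "insert a1 (insert a2 R) \<notin> C" using F(14)[of "{a1, a2}"] by simp
  qed
  then have va2: "insert a2 (insert v R) \<in> C" using na1 by blast
  have "insert b1 (insert v (insert a2 R)) \<in> C \<or> insert b2 (insert v (insert a2 R)) \<in> C"
  proof (rule adjacent_to_missing_edge)
    show "insert a2 R \<in> C" by (rule face_subset[OF va2]) blast
    show "b1 \<noteq> b2" "v \<noteq> b1" "v \<noteq> b2" "b1 \<in> V" "b2 \<in> V" "v \<in> V"
      "b1 \<notin> insert a2 R" "b2 \<notin> insert a2 R" "v \<notin> insert a2 R"
      using F d v by auto
    show "insert v (insert a2 R) \<in> C" using va2 by (simp add: insert_commute)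
    show "insert b1 (insert a2 R) \<in> C" "insert b2 (insert a2 R) \<in> C"
      using F(14)[of "{a2, b1}"] F(14)[of "{a2, b2}"] F(2-5) d by (auto simp: insert_commute)
    show "insert b1 (insert b2 (insert a2 R)) \<notin> C"
      using F(14)[of "{a2, b1, b2}"] by (simp add: insert_commute)
  qed
  moreover have "insert b1 (insert v (insert a2 R)) \<notin> C"
    by (rule square_nonneighbour_no_triangle[OF D d v(1-3) na1])
  moreover have "insert b2 (insert v (insert a2 R)) \<notin> C"
  proof (rule square_nonneighbour_no_triangle[OF _ d(1) d(2)[symmetric] v(1) _ v(3) na1])
    show "D_link R {a1, a2} {b2, b1}" using D by (simp add: insert_commute)
    show "v \<notin> {a1, a2, b2, b1}" using v(2) by auto
  qed
  ultimately show False by blast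
qed

lemma square_other_triangle:
  assumes D: "D_link R {a1, a2} {b1, b2}" and d: "a1 \<noteq> a2" "b1 \<noteq> b2"
    and v: "v \<in> V" "v \<notin> {a1, a2, b1, b2}" "v \<notin> R"
    and va1: "insert a1 (insert v R) \<in> C" and n: "insert a1 (insert b1 (insert v R)) \<notin> C"
  shows "insert a1 (insert b2 (insert v R)) \<in> C"
proof -
  note F = D_link_pairsD[OF D]
  have "insert b1 (insert v (insert a1 R)) \<in> C \<or> insert b2 (insert v (insert a1 R)) \<in> C"
  proof (rule adjacent_to_missing_edge)
    show "insert a1 R \<in> C" by (rule face_subset[OF va1]) blast
    show "b1 \<noteq> b2" "v \<noteq> b1" "v \<noteq> b2" "b1 \<in> V" "b2 \<in> V" "v \<in> V"
      "b1 \<notin> insert a1 R" "b2 \<notin> insert a1 R" "v \<notin> insert a1 R"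
      using F d v by auto
    show "insert v (insert a1 R) \<in> C" using va1 by (simp add: insert_commute)
    show "insert b1 (insert a1 R) \<in> C" "insert b2 (insert a1 R) \<in> C"
      using F(14)[of "{a1, b1}"] F(14)[of "{a1, b2}"] F(2-5) d by (auto simp: insert_commute)
    show "insert b1 (insert b2 (insert a1 R)) \<notin> C"
      using F(14)[of "{a1, b1, b2}"] by (simp add: insert_commute)
  qed
  then show ?thesis using n by (auto simp: insert_commute)
qed

lemma square_edge:
  assumes D: "D_link R {a1, a2} {b1, b2}" and d: "a1 \<noteq> a2" "b1 \<noteq> b2"
    and v: "v \<in> V" "v \<notin> {a1, a2, b1, b2}" "v \<notin> R" "insert v R \<in> C"
    and va1: "insert a1 (insert v R) \<in> C" and vb1: "insert b1 (insert v R) \<in> C"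
  shows "insert a1 (insert b1 (insert v R)) \<in> C"
proof (rule ccontr)
  assume n: "insert a1 (insert b1 (insert v R)) \<notin> C"
  note F = D_link_pairsD[OF D]
  have a1b2: "insert a1 (insert b2 (insert v R)) \<in> C"
    by (rule square_other_triangle[OF D d v(1-3) va1 n])
  have "insert b1 (insert a2 (insert v R)) \<in> C"
  proof (rule square_other_triangle[OF _ d(2,1) v(1) _ v(3) vb1])
    show "D_link R {b1, b2} {a1, a2}" by (rule D_link_sym[OF D])
    show "v \<notin> {b1, b2, a1, a2}" using v(2) by auto
    show "insert b1 (insert a1 (insert v R)) \<notin> C" using n by (simp add: insert_commute)
  qed
  then have a2b1: "insert a2 (insert b1 (insert v R)) \<in> C" by (simp add: insert_commute)
  have n1: "{a1, a2} \<union> R \<notin> C" "{b1, b2} \<union> R \<notin> C"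
    using F(14)[of "{a1, a2}"] F(14)[of "{b1, b2}"] by simp_all
  show False
  proof (cases "insert a2 (insert b2 (insert v R)) \<in> C")
    case True
    show False
    proof (rule no_P4_link[of "insert v R" a1 b2 a2 b1])
      show "insert v R \<in> C" by fact
      show "distinct [a1, b2, a2, b1]" using F d by auto
      show "{a1, b2, a2, b1} \<subseteq> V" "{a1, b2, a2, b1} \<inter> insert v R = {}" using F v by auto
      show "{a1, b2} \<union> insert v R \<in> C" by (rule face_subset[OF a1b2]) blast
      show "{b2, a2} \<union> insert v R \<in> C" by (rule face_subset[OF True]) blast
      show "{a2, b1} \<union> insert v R \<in> C" by (rule face_subset[OF a2b1]) blast
      show "{a1, b1} \<union> insert v R \<notin> C" by (rule nonface_superset[OF n]) blast
      show "{b2, b1} \<union> insert v R \<notin> C" by (rule nonface_superset[OF n1(2)]) blast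
      show "{a1, a2} \<union> insert v R \<notin> C" by (rule nonface_superset[OF n1(1)]) blast
    qed
  next
    case False
    show False
    proof (rule no_J2_link[OF F(1), of b1 a1 b2 a2 v])
      show "distinct [b1, a1, b2, a2, v]" using F d v by auto
      show "{b1, a1, b2, a2, v} \<subseteq> V" "{b1, a1, b2, a2, v} \<inter> R = {}" using F v by auto
      show "{b1, a1} \<union> R \<in> C" "{b2, a2} \<union> R \<in> C"
        using F(14)[of "{a1, b1}"] F(14)[of "{a2, b2}"] F(2-5) d by (auto simp: insert_commute)
      show "{a1, b2, v} \<union> R \<in> C" by (rule face_subset[OF a1b2]) blast
      show "{b1, a2, v} \<union> R \<in> C" by (rule face_subset[OF a2b1]) blast
      show "{b1, b2} \<union> R \<notin> C" "{a1, a2} \<union> R \<notin> C" using n1 by simp_all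
      show "{b1, a1, v} \<union> R \<notin> C" by (rule nonface_superset[OF n]) blast
      show "{b2, a2, v} \<union> R \<notin> C" by (rule nonface_superset[OF False]) blast
    qed
  qed
qed

lemma square_cone_point:
  assumes D: "D_link R {a1, a2} {b1, b2}" and d: "a1 \<noteq> a2" "b1 \<noteq> b2"
    and v: "v \<in> V" "v \<notin> {a1, a2, b1, b2}" "v \<notin> R" "insert v R \<in> C"
  shows "cone_point R {a1, a2} {b1, b2} v"
proof -
  have edge: "insert a (insert b (insert v R)) \<in> C" if a: "a \<in> {a1, a2}" and b: "b \<in> {b1, b2}" for a b
  proof -
    define a' where "a' = (if a = a1 then a2 else a1)"
    define b' where "b' = (if b = b1 then b2 else b1)"
    have A: "{a1, a2} = {a, a'}" "a \<noteq> a'" using a d(1) by (auto simp: a'_def)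
    have B: "{b1, b2} = {b, b'}" "b \<noteq> b'" using b d(2) by (auto simp: b'_def)
    have D': "D_link R {a, a'} {b, b'}" using D unfolding A(1) B(1) .
    have v': "v \<notin> {a, a', b, b'}" "v \<notin> {b, b', a, a'}" using v(2) A(1) B(1) by auto
    have va: "insert a (insert v R) \<in> C"
      by (rule square_neighbour[OF D' A(2) B(2) v(1) v'(1) v(3,4)])
    have vb: "insert b (insert v R) \<in> C"
      by (rule square_neighbour[OF D_link_sym[OF D'] B(2) A(2) v(1) v'(2) v(3,4)])
    show ?thesis by (rule square_edge[OF D' A(2) B(2) v(1) v'(1) v(3,4) va vb])
  qed
  show ?thesis unfolding cone_point_def
  proof (intro allI impI)
    fix G assume G: "G \<subseteq> {a1, a2} \<union> {b1, b2}" "\<not> {a1, a2} \<subseteq> G" "\<not> {b1, b2} \<subseteq> G"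
    then obtain a b where ab: "a \<in> {a1, a2}" "b \<in> {b1, b2}" "G \<subseteq> {a, b}" by blast
    show "insert v (G \<union> R) \<in> C" by (rule face_subset[OF edge[OF ab(1,2)]]) (use ab(3) in blast)
  qed
qed

lemma D_link_neighbour:
  assumes D: "D_link R M N" and M: "2 \<le> card M" and N: "N \<noteq> {}"
    and v: "v \<in> V" "v \<notin> M" "v \<notin> R" "insert v R \<in> C"
  shows "\<exists>w\<in>M. insert w (insert v R) \<in> C"
proof (rule missing_face_has_neighbour[OF D_linkD(1)[OF D] M _ _ v])
  show "M \<subseteq> V" "M \<inter> R = {}" using D_linkD(3,4)[OF D] by blast+
  show "M \<union> R \<notin> C" using D_linkD(5)[OF D, of M] by simp
  fix z assume "z \<in> M"
  then have "M - {z} \<subseteq> M \<union> N" "\<not> M \<subseteq> M - {z}" "\<not> N \<subseteq> M - {z}"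
    using D_linkD(2)[OF D] N by auto
  then show "M - {z} \<union> R \<in> C" using D_linkD(5)[OF D, of "M - {z}"] by simp
qed

lemma cone_point_from_link:
  assumes c: "cone_point (insert w R) (M - {w}) N v" and w: "w \<in> M"
    and G: "G \<subseteq> M \<union> N" "\<not> M - {w} \<subseteq> G" "\<not> N \<subseteq> G"
  shows "insert v (G \<union> R) \<in> C"
proof -
  have "insert v ((G - {w}) \<union> insert w R) \<in> C"
    using c unfolding cone_point_def by (rule allE[of _ "G - {w}"]) (use G in blast)
  then show ?thesis by (rule face_subset) blast
qed

lemma cone_point_step:
  assumes IH: "\<And>R' M'. card M' < card M \<Longrightarrow> D_link R' M' N \<Longrightarrow> 2 \<le> card M' \<Longrightarrow> v \<notin> M' \<Longrightarrow>
      v \<notin> R' \<Longrightarrow> insert v R' \<in> C \<Longrightarrow> cone_point R' M' N v"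
    and D: "D_link R M N" and M: "3 \<le> card M" and N: "2 \<le> card N"
    and v: "v \<in> V" "v \<notin> M" "v \<notin> N" "v \<notin> R" "insert v R \<in> C"
  shows "cone_point R M N v"
proof -
  have finM: "finite M" using D_link_finite(1)[OF D] .
  have Nne: "N \<noteq> {}" using N by auto
  have via_link: "insert v (G \<union> R) \<in> C"
    if w: "w \<in> M" "insert w (insert v R) \<in> C"
      and G: "G \<subseteq> M \<union> N" "\<not> M - {w} \<subseteq> G" "\<not> N \<subseteq> G" for w G
  proof -
    have card: "card (M - {w}) < card M" "2 \<le> card (M - {w})"
      using M w(1) finM by (simp_all add: card_Diff_singleton)
    have "cone_point (insert w R) (M - {w}) N v"
    proof (rule IH[OF card(1) D_link_link[OF D w(1) _ Nne] card(2)])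
      show "2 \<le> card M" using M by simp
      show "v \<notin> M - {w}" "v \<notin> insert w R" using v(2,4) w(1) by auto
      show "insert v (insert w R) \<in> C" by (rule face_subset[OF w(2)]) blast
    qed
    then show ?thesis by (rule cone_point_from_link[OF _ w(1) G])
  qed
  obtain w0 where w0: "w0 \<in> M" "insert w0 (insert v R) \<in> C"
    using D_link_neighbour[OF D _ Nne v(1,2,4,5)] M by auto
  have "\<not> N \<subseteq> {x}" for x using card_ge_2_not_subset_singleton[OF N] .
  moreover have "\<not> M - {w0} \<subseteq> {x}" for x
    by (rule card_ge_2_not_subset_singleton) (use M w0(1) finM in \<open>simp add: card_Diff_singleton\<close>)
  ultimately have vertex: "insert x (insert v R) \<in> C" if "x \<in> M \<union> N" for x
    using via_link[OF w0, of "{x}"] that by (simp add: insert_commute)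
  show ?thesis unfolding cone_point_def
  proof (intro allI impI)
    fix G assume G: "G \<subseteq> M \<union> N" "\<not> M \<subseteq> G" "\<not> N \<subseteq> G"
    show "insert v (G \<union> R) \<in> C"
    proof (cases "M - {w0} \<subseteq> G")
      case False
      then show ?thesis using via_link[OF w0 G(1) _ G(3)] by blast
    next
      case True
      then have "w0 \<notin> G" using G(2) by blast
      obtain w where w: "w \<in> M" "w \<noteq> w0"
        using card_ge_2_not_subset_singleton[of M w0] M by auto
      then have "\<not> M - {w} \<subseteq> G" using \<open>w0 \<notin> G\<close> w0(1) by blast
      then show ?thesis using via_link[OF w(1) vertex G(1) _ G(3)] w(1) by blast
    qed
  qed
qed

lemma cone_point_of_vertex:
  "D_link R M N \<Longrightarrow> 2 \<le> card M \<Longrightarrow> 2 \<le> card N \<Longrightarrow> v \<in> V \<Longrightarrow> v \<notin> M \<Longrightarrow> v \<notin> N \<Longrightarrow>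
    v \<notin> R \<Longrightarrow> insert v R \<in> C \<Longrightarrow> cone_point R M N v"
proof (induction "card M + card N" arbitrary: R M N rule: less_induct)
  case less
  note prems = less.prems
  consider "3 \<le> card M" | "3 \<le> card N" | "card M = 2" "card N = 2"
    using prems(2,3) by linarith
  then show ?case
  proof cases
    case 1
    show ?thesis
    proof (rule cone_point_step[OF _ prems(1) 1 prems(3-8)])
      fix R' M' assume "card M' < card M" "D_link R' M' N" "2 \<le> card M'" "v \<notin> M'" "v \<notin> R'"
        "insert v R' \<in> C"
      then show "cone_point R' M' N v" using less.hyps prems(3-6) by simp
    qed
  next
    case 2
    have "cone_point R N M v"
    proof (rule cone_point_step[OF _ D_link_sym[OF prems(1)] 2 prems(2,4,6,5,7,8)])
      fix R' N' assume "card N' < card N" "D_link R' N' M" "2 \<le> card N'" "v \<notin> N'" "v \<notin> R'"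
        "insert v R' \<in> C"
      then have "cone_point R' M N' v" using less.hyps[of M N'] prems(2,4,5) D_link_sym by simp
      then show "cone_point R' N' M v" by (rule cone_point_sym)
    qed
    then show ?thesis by (rule cone_point_sym)
  next
    case 3
    then obtain a1 a2 b1 b2 where ab: "M = {a1, a2}" "a1 \<noteq> a2" "N = {b1, b2}" "b1 \<noteq> b2"
      unfolding card_2_iff by blast
    show ?thesis
      unfolding ab(1,3) by (rule square_cone_point) (use prems ab in auto)
  qed
qed

section \<open>Adjacent cone points and the non-ghost vertices\<close>

lemma D_link_restrict:
  assumes D: "D_link R M N" and sub: "M' \<subseteq> M" "N' \<subseteq> N" and ne: "M' \<noteq> {}" "N' \<noteq> {}"
  shows "D_link ((M - M') \<union> (N - N') \<union> R) M' N'"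
proof -
  let ?S = "(M - M') \<union> (N - N')"
  have MN: "M \<inter> N = {}" using D_linkD(2)[OF D] .
  have covers: "M \<subseteq> G \<union> ?S \<longleftrightarrow> M' \<subseteq> G" "N \<subseteq> G \<union> ?S \<longleftrightarrow> N' \<subseteq> G"
    if "G \<subseteq> M' \<union> N'" for G
    using that sub MN by blast+
  have faces: "G \<union> (?S \<union> R) \<in> C \<longleftrightarrow> \<not> M' \<subseteq> G \<and> \<not> N' \<subseteq> G" if G: "G \<subseteq> M' \<union> N'" for G
  proof -
    have "G \<union> ?S \<subseteq> M \<union> N" using G sub by blast
    then show ?thesis using D_linkD(5)[OF D, of "G \<union> ?S"] covers[OF G] by (simp add: Un_assoc)
  qed
  show ?thesis unfolding D_link_def
  proof (intro conjI allI impI)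
    show "?S \<union> R \<in> C" using faces[of "{}"] ne by simp
    show "M' \<inter> N' = {}" "M' \<union> N' \<subseteq> V" using MN sub D_linkD(4)[OF D] by blast+
    show "(M' \<union> N') \<inter> (?S \<union> R) = {}" using MN sub D_linkD(3)[OF D] by blast
  qed (use faces in blast)
qed

lemma cone_point_restrict:
  assumes c: "cone_point R M N u" and sub: "M' \<subseteq> M" "N' \<subseteq> N" and MN: "M \<inter> N = {}"
  shows "cone_point ((M - M') \<union> (N - N') \<union> R) M' N' u"
  unfolding cone_point_def
proof (intro allI impI)
  fix G assume G: "G \<subseteq> M' \<union> N'" "\<not> M' \<subseteq> G" "\<not> N' \<subseteq> G"
  let ?H = "G \<union> (M - M') \<union> (N - N')"
  have "?H \<subseteq> M \<union> N" "\<not> M \<subseteq> ?H" "\<not> N \<subseteq> ?H" using G sub MN by blast+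
  then have "insert u (?H \<union> R) \<in> C" using c unfolding cone_point_def by blast
  then show "insert u (G \<union> ((M - M') \<union> (N - N') \<union> R)) \<in> C" by (simp add: Un_assoc)
qed

lemma square_cone_points_adjacent:
  assumes D: "D_link R {a1, a2} {b1, b2}" and d: "a1 \<noteq> a2" "b1 \<noteq> b2" "u \<noteq> v"
    and u: "u \<in> V" "u \<notin> {a1, a2, b1, b2}" "u \<notin> R" "cone_point R {a1, a2} {b1, b2} u"
    and v: "v \<in> V" "v \<notin> {a1, a2, b1, b2}" "v \<notin> R" "cone_point R {a1, a2} {b1, b2} v"
  shows "insert u (insert v R) \<in> C"
proof (rule ccontr)
  assume nuv: "insert u (insert v R) \<notin> C"
  note F = D_link_pairsD[OF D]
  show False
  proof (rule no_O6_link[OF F(1), of a1 a2 b1 b2 u v])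
    show "distinct [a1, a2, b1, b2, u, v]" using F d u v by auto
    show "{a1, a2, b1, b2, u, v} \<subseteq> V" "{a1, a2, b1, b2, u, v} \<inter> R = {}" using F u v by auto
    fix G assume G: "G \<subseteq> {a1, a2, b1, b2, u, v}"
    define H where "H = G - {u, v}"
    have H: "H \<subseteq> {a1, a2, b1, b2}" "H \<subseteq> {a1, a2} \<union> {b1, b2}"
      "{a1, a2} \<subseteq> H \<longleftrightarrow> {a1, a2} \<subseteq> G" "{b1, b2} \<subseteq> H \<longleftrightarrow> {b1, b2} \<subseteq> G"
      using G u(2) v(2) unfolding H_def by auto
    have HR: "H \<union> R \<in> C \<longleftrightarrow> \<not> {a1, a2} \<subseteq> G \<and> \<not> {b1, b2} \<subseteq> G"
      using F(14)[OF H(1)] unfolding H(3,4) .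
    have cone: "insert x (H \<union> R) \<in> C" if "cone_point R {a1, a2} {b1, b2} x"
      and "\<not> {a1, a2} \<subseteq> G" "\<not> {b1, b2} \<subseteq> G" for x
      using that H(2-4) unfolding cone_point_def by blast
    show "G \<union> R \<in> C \<longleftrightarrow> \<not> {a1, a2} \<subseteq> G \<and> \<not> {b1, b2} \<subseteq> G \<and> \<not> {u, v} \<subseteq> G"
    proof
      assume GR: "G \<union> R \<in> C"
      have "H \<union> R \<in> C" by (rule face_subset[OF GR]) (auto simp: H_def)
      moreover have "\<not> {u, v} \<subseteq> G"
        using nonface_superset[OF nuv, of "G \<union> R"] GR by blast
      ultimately show "\<not> {a1, a2} \<subseteq> G \<and> \<not> {b1, b2} \<subseteq> G \<and> \<not> {u, v} \<subseteq> G" using HR by blast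
    next
      assume h: "\<not> {a1, a2} \<subseteq> G \<and> \<not> {b1, b2} \<subseteq> G \<and> \<not> {u, v} \<subseteq> G"
      then consider "G \<union> R = insert u (H \<union> R)" | "G \<union> R = insert v (H \<union> R)" | "G \<union> R = H \<union> R"
        unfolding H_def by blast
      then show "G \<union> R \<in> C" using cone[OF u(4)] cone[OF v(4)] HR h by cases auto
    qed
  qed
qed

lemma cone_points_adjacent:
  assumes D: "D_link R M N" and M: "2 \<le> card M" and N: "2 \<le> card N" and uv: "u \<noteq> v"
    and u: "u \<in> V" "u \<notin> M" "u \<notin> N" "u \<notin> R" "insert u R \<in> C"
    and v: "v \<in> V" "v \<notin> M" "v \<notin> N" "v \<notin> R" "insert v R \<in> C"
  shows "insert u (insert v R) \<in> C"
proof -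
  obtain a1 a2 where a: "a1 \<in> M" "a2 \<in> M" "a1 \<noteq> a2" using card_ge_2_obtain[OF M] .
  obtain b1 b2 where b: "b1 \<in> N" "b2 \<in> N" "b1 \<noteq> b2" using card_ge_2_obtain[OF N] .
  let ?R = "(M - {a1, a2}) \<union> (N - {b1, b2}) \<union> R"
  have sub: "{a1, a2} \<subseteq> M" "{b1, b2} \<subseteq> N" using a b by auto
  have MN: "M \<inter> N = {}" using D_linkD(2)[OF D] .
  have "insert u (insert v ?R) \<in> C"
  proof (rule square_cone_points_adjacent[OF D_link_restrict[OF D sub] a(3) b(3) uv])
    show "u \<in> V" "u \<notin> {a1, a2, b1, b2}" "u \<notin> ?R" "v \<in> V" "v \<notin> {a1, a2, b1, b2}" "v \<notin> ?R"
      using a b u v by auto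
    show "cone_point ?R {a1, a2} {b1, b2} u"
      by (rule cone_point_restrict[OF cone_point_of_vertex[OF D M N u] sub MN])
    show "cone_point ?R {a1, a2} {b1, b2} v"
      by (rule cone_point_restrict[OF cone_point_of_vertex[OF D M N v] sub MN])
  qed simp_all
  then show ?thesis by (rule face_subset) blast
qed

lemma D_link_emptyI:
  assumes "M \<inter> N = {}" "M \<union> N \<subseteq> V" "M \<noteq> {}" "N \<noteq> {}"
    and faces: "\<And>G. G \<subseteq> M \<union> N \<Longrightarrow> G \<in> C \<longleftrightarrow> \<not> M \<subseteq> G \<and> \<not> N \<subseteq> G"
  shows "D_link {} M N"
  unfolding D_link_def using assms faces[of "{}"] by simp

lemma D_link_extend:
  assumes D: "D_link {} M N" and ne: "M \<noteq> {}" "N \<noteq> {}" and T: "T \<subseteq> V" "T \<inter> (M \<union> N) = {}"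
    and faces: "\<And>G. G \<subseteq> M \<union> N \<Longrightarrow> \<not> M \<subseteq> G \<Longrightarrow> \<not> N \<subseteq> G \<Longrightarrow> G \<union> T \<in> C"
  shows "D_link T M N"
  unfolding D_link_def
proof (intro conjI allI impI)
  show "T \<in> C" using faces[of "{}"] ne by simp
  show "M \<inter> N = {}" "M \<union> N \<subseteq> V" using D_linkD(2,4)[OF D] .
  show "(M \<union> N) \<inter> T = {}" using T(2) by blast
  fix G assume G: "G \<subseteq> M \<union> N"
  show "G \<union> T \<in> C \<longleftrightarrow> \<not> M \<subseteq> G \<and> \<not> N \<subseteq> G"
  proof
    assume "G \<union> T \<in> C"
    then have "G \<in> C" by (rule face_subset) blast
    then show "\<not> M \<subseteq> G \<and> \<not> N \<subseteq> G" using D_linkD(5)[OF D G] by simp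
  qed (use faces[OF G] in blast)
qed

lemma D_link_empty_non_ghost:
  assumes D: "D_link {} M N" and M: "2 \<le> card M" and N: "2 \<le> card N"
  shows "M \<union> N \<subseteq> non_ghost (V, C)"
proof
  fix x assume x: "x \<in> M \<union> N"
  have "{x} \<in> C"
    using D_linkD(5)[OF D, of "{x}"] x card_ge_2_not_subset_singleton[OF M]
      card_ge_2_not_subset_singleton[OF N] by simp
  then show "x \<in> non_ghost (V, C)" using x D_linkD(4)[OF D] by (auto simp: non_ghost_def)
qed

lemma D_link_insert:
  assumes D: "D_link {} M N" and M: "2 \<le> card M" and N: "2 \<le> card N"
    and T: "D_link T M N" and u: "u \<in> V" "u \<notin> M" "u \<notin> N" "u \<notin> T" "insert u T \<in> C"
  shows "D_link (insert u T) M N"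
proof (rule D_link_extend[OF D])
  show "M \<noteq> {}" "N \<noteq> {}" using M N by auto
  show "insert u T \<subseteq> V" using u(1) face_subset_ground[OF D_linkD(1)[OF T]] by blast
  show "insert u T \<inter> (M \<union> N) = {}" using u(2,3) D_linkD(3)[OF T] by blast
  have c: "cone_point T M N u" by (rule cone_point_of_vertex[OF T M N u])
  fix G assume "G \<subseteq> M \<union> N" "\<not> M \<subseteq> G" "\<not> N \<subseteq> G"
  then have "insert u (G \<union> T) \<in> C" using c unfolding cone_point_def by blast
  then show "G \<union> insert u T \<in> C" by simp
qed

lemma D_link_non_ghost:
  assumes D: "D_link {} M N" and M: "2 \<le> card M" and N: "2 \<le> card N"
  shows "T \<subseteq> non_ghost (V, C) - (M \<union> N) \<Longrightarrow> D_link T M N"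
proof (induction "card T" arbitrary: T rule: less_induct)
  case less
  have TV: "T \<subseteq> V" "T \<inter> (M \<union> N) = {}" using less.prems by (auto simp: non_ghost_def)
  have finT: "finite T" using finite_subset[OF TV(1) finite_ground] .
  have smaller: "D_link T' M N" if "T' \<subset> T" for T'
    by (rule less.hyps[OF psubset_card_mono[OF finT that]]) (use that less.prems in blast)
  show ?case
  proof (cases "T = {}")
    case True
    then show ?thesis using D by simp
  next
    case False
    then obtain u where u: "u \<in> T" by blast
    have uV: "u \<in> V" "u \<notin> M" "u \<notin> N" "{u} \<in> C" using u less.prems by (auto simp: non_ghost_def)
    have T0: "D_link (T - {u}) M N" by (rule smaller) (use u in blast)
    have "T \<in> C"
    proof (cases "T = {u}")
      case True
      then show ?thesis using uV(4) by simp
    next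
      case False
      then obtain v where v: "v \<in> T" "v \<noteq> u" using u by blast
      have "insert u (insert v (T - {u, v})) \<in> C"
      proof (rule cone_points_adjacent[OF smaller M N v(2)[symmetric] uV(1-3) _ _ _ _ _ _ _])
        show "T - {u, v} \<subset> T" using u by blast
        show "v \<in> V" "v \<notin> M" "v \<notin> N" using v(1) TV by auto
        show "u \<notin> T - {u, v}" "v \<notin> T - {u, v}" by auto
        have "insert u (T - {u, v}) = T - {v}" "insert v (T - {u, v}) = T - {u}" using u v by auto
        moreover have "T - {v} \<subset> T" using v(1) by blast
        ultimately show "insert u (T - {u, v}) \<in> C" "insert v (T - {u, v}) \<in> C"
          using D_linkD(1)[OF smaller] D_linkD(1)[OF T0] by simp_all
      qed
      moreover have "insert u (insert v (T - {u, v})) = T" using u v by auto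
      ultimately show ?thesis by simp
    qed
    moreover have "insert u (T - {u}) = T" using u by blast
    ultimately show ?thesis using D_link_insert[OF D M N T0 uV(1-3)] by simp
  qed
qed

lemma non_ghost_face_iff:
  assumes D: "D_link {} M N" and M: "2 \<le> card M" and N: "2 \<le> card N"
    and F: "F \<subseteq> non_ghost (V, C)"
  shows "F \<in> C \<longleftrightarrow> F \<inter> (M \<union> N) \<in> C"
proof
  assume "F \<inter> (M \<union> N) \<in> C"
  then have "\<not> M \<subseteq> F \<inter> (M \<union> N)" "\<not> N \<subseteq> F \<inter> (M \<union> N)"
    using D_linkD(5)[OF D, of "F \<inter> (M \<union> N)"] by auto
  moreover have "D_link (F - (M \<union> N)) M N" by (rule D_link_non_ghost[OF D M N]) (use F in blast)
  ultimately have "F \<inter> (M \<union> N) \<union> (F - (M \<union> N)) \<in> C"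
    using D_linkD(5)[of "F - (M \<union> N)" M N "F \<inter> (M \<union> N)"] by blast
  moreover have "F \<inter> (M \<union> N) \<union> (F - (M \<union> N)) = F" by blast
  ultimately show "F \<in> C" by simp
qed (rule face_subset, blast+)

end

theorem proposition4p5:
  fixes K :: "'a complex" and m n :: nat
  assumes "m \<ge> 1" and "n \<ge> 1"
    and "simplicial_complex K"
    and "beta_avoiding K"
    and "\<exists>W. W \<subseteq> fst K \<and> iso (induced K W) (D m n)"
  shows "\<exists>p. iso (induced K (non_ghost K)) (cone p (D m n))"
proof -
  obtain V C where K: "K = (V, C)" by fastforce
  interpret beta_avoiding_complex V C using assms(3,4) unfolding K by unfold_locales
  obtain W where W: "W \<subseteq> V" "iso (W, {F \<in> C. F \<subseteq> W}) (D m n)"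
    using assms(5) unfolding K induced_def by auto
  obtain M N where MN: "M \<inter> N = {}" "M \<union> N = W" "card M = Suc m" "card N = Suc n"
    and faces: "\<And>G. G \<subseteq> W \<Longrightarrow> G \<in> {F \<in> C. F \<subseteq> W} \<longleftrightarrow> \<not> M \<subseteq> G \<and> \<not> N \<subseteq> G"
    by (rule iso_D_sides[OF W(2)]) (rule that)
  have card: "2 \<le> card M" "2 \<le> card N" using MN(3,4) assms(1,2) by simp_all
  have D: "D_link {} M N"
    by (rule D_link_emptyI) (use MN W(1) card faces in auto)
  define U where "U = non_ghost K - W"
  have ng: "non_ghost K = W \<union> U"
    using D_link_empty_non_ghost[OF D card] MN(2) unfolding U_def K by blast
  have "iso (W \<union> U, {F \<in> C. F \<subseteq> W \<union> U}) (cone (card U) (D m n))"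
  proof (rule iso_cone[OF W(2)])
    show "W \<inter> U = {}" unfolding U_def by blast
    show "finite U" using finite_subset[OF _ finite_ground] unfolding U_def K non_ghost_def by auto
    fix F assume "F \<subseteq> W \<union> U"
    then show "F \<in> {F \<in> C. F \<subseteq> W \<union> U} \<longleftrightarrow> F \<inter> W \<in> {F \<in> C. F \<subseteq> W}"
      using non_ghost_face_iff[OF D card, of F] ng MN(2) unfolding K by auto
  qed
  then show ?thesis unfolding K induced_def ng[unfolded K] snd_conv by blast
qed

end
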